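(* Let $D$ be a non-commutative division ring with center $F$. If $M$ is an irreducible locally solvable maximal subgroup of $D^*$, then its derived subgroup $M'$ is not contained in $F$.
   Context: $D^*$ is the multiplicative group of $D$; maximal subgroup = proper subgroup maximal among proper subgroups. A subgroup $G\le D^*$ is irreducible if the division subring $F(G)$ generated by $F\cup G$ equals $D$. Locally solvable: every finitely generated subgroup solvable. *)

theory Defs
  imports "HOL-Algebra.Solvable_Groups"
begin

definition mult_grp :: "('a::division_ring) monoid" where
  "mult_grp = \<lparr>carrier = UNIV - {0}, mult = (*), one = 1\<rparr>"

definition center :: "('a::division_ring) set" where
  "center = {z. \<forall>x. z * x = x * z}"

definition div_subring :: "('a::division_ring) set \<Rightarrow> bool" where
  "div_subring S \<longleftrightarrow> 0 \<in> S \<and> 1 \<in> S \<and>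
     (\<forall>x\<in>S. \<forall>y\<in>S. x + y \<in> S \<and> x * y \<in> S) \<and>
     (\<forall>x\<in>S. - x \<in> S) \<and> (\<forall>x\<in>S. x \<noteq> 0 \<longrightarrow> inverse x \<in> S)"

definition div_subring_gen :: "('a::division_ring) set \<Rightarrow> 'a set" where
  "div_subring_gen A = \<Inter>{S. div_subring S \<and> A \<subseteq> S}"

definition maximal_subgroup :: "('a::division_ring) set \<Rightarrow> bool" where
  "maximal_subgroup M \<longleftrightarrow> subgroup M mult_grp \<and> M \<noteq> carrier mult_grp \<and>
     (\<forall>H. subgroup H mult_grp \<and> M \<subseteq> H \<longrightarrow> H = M \<or> H = carrier mult_grp)"

definition irreducible_subgroup :: "('a::division_ring) set \<Rightarrow> bool" where
  "irreducible_subgroup G \<longleftrightarrow> subgroup G mult_grp \<and> div_subring_gen (center \<union> G) = UNIV"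

definition locally_solvable :: "('a::division_ring) set \<Rightarrow> bool" where
  "locally_solvable G \<longleftrightarrow> (\<forall>S. finite S \<and> S \<subseteq> G \<longrightarrow> solvable (subgroup_generated mult_grp S))"

end

theory Submission
  imports Defs
begin

text \<open>
  Suppose \<open>M' \<subseteq> F\<close>, so any two elements of \<open>M\<close> commute up to a central factor.
  Irreducibility and non-commutativity give some \<open>x \<in> M - F\<close>. The elements \<open>u\<close> with
  \<open>u x u\<^sup>-\<^sup>1 \<in> F x\<close> form a subgroup containing \<open>M\<close>; it is proper, since \<open>u\<close> and \<open>u + 1\<close>
  both lying in it forces \<open>u\<close> to commute with \<open>x\<close>. By maximality it equals \<open>M\<close>, so
  \<open>1 + x \<in> M\<close>. Since \<open>1\<close> and \<open>x\<close> are linearly independent over \<open>F\<close>, an element twisting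
  both \<open>x\<close> and \<open>1 + x\<close> by central factors must commute with \<open>x\<close>. Hence \<open>x\<close> centralizes
  \<open>F \<union> M\<close> and therefore \<open>F(M) = D\<close>, i.e. \<open>x \<in> F\<close>, a contradiction.
\<close>

lemma carrier_mult_grp [simp]: "carrier mult_grp = UNIV - {0}"
  and mult_mult_grp [simp]: "x \<otimes>\<^bsub>mult_grp\<^esub> y = x * y"
  and one_mult_grp [simp]: "\<one>\<^bsub>mult_grp\<^esub> = 1"
  by (simp_all add: mult_grp_def)

lemma inv_mult_grp [simp]: "(x::'a::division_ring) \<noteq> 0 \<Longrightarrow> inv\<^bsub>mult_grp\<^esub> x = inverse x"
  unfolding m_inv_def by (rule the_equality) (auto simp: mult_grp_def intro: inverse_unique[symmetric])

lemma center_commute: "a \<in> center \<Longrightarrow> a * x = x * a"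
  by (simp add: center_def)

lemma zero_in_center: "0 \<in> center"
  by (simp add: center_def)

lemma div_subring_inverse: "div_subring S \<Longrightarrow> x \<in> S \<Longrightarrow> inverse (x::'a::division_ring) \<in> S"
  unfolding div_subring_def by (cases "x = 0") auto

lemma div_subring_diff: "div_subring S \<Longrightarrow> x \<in> S \<Longrightarrow> y \<in> S \<Longrightarrow> x - y \<in> S"
  unfolding div_subring_def by (metis diff_conv_add_uminus)

lemma div_subring_centralizer: "div_subring {z::'a::division_ring. z * x = x * z}"
proof -
  have "inverse z * x = x * inverse z" if "z * x = x * z" "z \<noteq> 0" for z
  proof -
    have "inverse z * x = inverse z * x * (z * inverse z)"
      using that by simp
    also have "\<dots> = inverse z * (x * z) * inverse z"
      by (simp only: mult.assoc)
    also have "\<dots> = inverse z * (z * x) * inverse z"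
      using that by simp
    also have "\<dots> = x * inverse z"
      using that(2) by (simp add: mult.assoc[symmetric])
    finally show ?thesis .
  qed
  moreover have "y * z * x = x * (y * z)" if "z * x = x * z" "y * x = x * y" for y z
    using that by (simp add: mult.assoc flip: mult.assoc[of y x z])
  ultimately show ?thesis
    unfolding div_subring_def by (auto simp: distrib_left distrib_right)
qed

lemma div_subring_INT:
  assumes "\<And>i. div_subring (S i :: 'a::division_ring set)"
  shows "div_subring (\<Inter>i. S i)"
proof -
  have "0 \<in> S i" "1 \<in> S i"
    "x \<in> S i \<Longrightarrow> y \<in> S i \<Longrightarrow> x + y \<in> S i"
    "x \<in> S i \<Longrightarrow> y \<in> S i \<Longrightarrow> x * y \<in> S i"
    "x \<in> S i \<Longrightarrow> - x \<in> S i"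
    "x \<in> S i \<Longrightarrow> x \<noteq> 0 \<Longrightarrow> inverse x \<in> S i" for i x y
    using assms[of i] unfolding div_subring_def by auto
  then show ?thesis
    unfolding div_subring_def by simp
qed

lemma div_subring_center: "div_subring (center :: 'a::division_ring set)"
proof -
  have "center = (\<Inter>x. {z::'a. z * x = x * z})"
    unfolding center_def by auto
  show ?thesis
    by (subst \<open>center = _\<close>) (intro div_subring_INT div_subring_centralizer)
qed

lemma one_in_center: "1 \<in> center"
  using div_subring_center unfolding div_subring_def by blast

lemma center_mult_closed: "a \<in> center \<Longrightarrow> b \<in> center \<Longrightarrow> a * b \<in> center"
  using div_subring_center unfolding div_subring_def by blast

lemma center_uminus_closed: "a \<in> center \<Longrightarrow> - a \<in> center"
  using div_subring_center unfolding div_subring_def by blast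

lemma center_diff_closed: "a \<in> center \<Longrightarrow> b \<in> center \<Longrightarrow> a - b \<in> center"
  by (rule div_subring_diff[OF div_subring_center])

lemma center_inverse_closed: "a \<in> center \<Longrightarrow> inverse (a::'a::division_ring) \<in> center"
  by (rule div_subring_inverse[OF div_subring_center])

lemma div_subring_gen_least: "div_subring S \<Longrightarrow> A \<subseteq> S \<Longrightarrow> div_subring_gen A \<subseteq> S"
  unfolding div_subring_gen_def by auto

lemma central_combination_eq_0:
  fixes a b x :: "'a::division_ring"
  assumes "a \<in> center" "b \<in> center" "x \<notin> center" "a + b * x = 0"
  shows "a = 0" "b = 0"
proof -
  show "b = 0"
  proof (rule ccontr)
    assume "b \<noteq> 0"
    have "b * x = - a"
      using assms(4) by (simp add: eq_neg_iff_add_eq_0 add.commute)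
    then have "x = inverse b * (- a)"
      using \<open>b \<noteq> 0\<close> by (metis left_inverse mult.assoc mult_1_left)
    then show False
      using assms by (simp add: center_mult_closed center_inverse_closed center_uminus_closed)
  qed
  then show "a = 0"
    using assms(4) by simp
qed

text \<open>\<open>u x u\<^sup>-\<^sup>1 \<in> F x\<close>, written without inverses so that it also makes sense for \<open>u = 0\<close>.\<close>
definition normalizes_line :: "'a::division_ring \<Rightarrow> 'a \<Rightarrow> bool" where
  "normalizes_line u x \<longleftrightarrow> (\<exists>a\<in>center. u * x = a * x * u)"

lemma commute_if_normalizes_line_and_one_plus:
  fixes x y :: "'a::division_ring"
  assumes "normalizes_line y x" "normalizes_line y (1 + x)" "x \<notin> center" "y \<noteq> 0"
  shows "y * x = x * y"
proof -
  obtain f g where f: "f \<in> center" "y * x = f * x * y"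
    and g: "g \<in> center" "y * (1 + x) = g * (1 + x) * y"
    using assms(1,2) unfolding normalizes_line_def by blast
  have "y + f * x * y = g * y + g * x * y"
    using f(2) g(2) by (simp add: algebra_simps)
  then have "((1 - g) + (f - g) * x) * y = 0"
    by (simp add: algebra_simps)
  then have "(1 - g) + (f - g) * x = 0"
    using assms(4) by simp
  moreover have "1 - g \<in> center" "f - g \<in> center"
    using center_diff_closed one_in_center f(1) g(1) by blast+
  ultimately have "1 - g = 0" "f - g = 0"
    using central_combination_eq_0 assms(3) by blast+
  then show ?thesis
    using f(2) by simp
qed

lemma commute_if_plus_one_normalizes_line:
  fixes u x :: "'a::division_ring"
  assumes "normalizes_line u x" "normalizes_line (u + 1) x" "x \<noteq> 0"
  shows "u * x = x * u"
proof (cases "u \<in> center")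
  case True
  then show ?thesis by (rule center_commute)
next
  case False
  obtain a b where a: "a \<in> center" "u * x = a * x * u"
    and b: "b \<in> center" "(u + 1) * x = b * x * (u + 1)"
    using assms(1,2) unfolding normalizes_line_def by blast
  have ab: "a - b \<in> center" and b1: "1 - b \<in> center"
    using center_diff_closed one_in_center a(1) b(1) by blast+
  have "(a - b) * x * u + (1 - b) * x = 0"
    using a(2) b(2) by (simp add: algebra_simps)
  also have "(a - b) * x * u + (1 - b) * x = x * ((1 - b) + (a - b) * u)"
    using center_commute[OF ab, of x] center_commute[OF b1, of x]
    by (simp add: distrib_left mult.assoc[symmetric] add.commute)
  finally have "(1 - b) + (a - b) * u = 0"
    using assms(3) by simp
  then have "1 - b = 0" "a - b = 0"
    using central_combination_eq_0 ab b1 False by blast+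
  then show ?thesis
    using a(2) by simp
qed

definition line_normalizer :: "'a::division_ring \<Rightarrow> 'a set" where
  "line_normalizer x = {u. u \<noteq> 0 \<and> normalizes_line u x}"

lemma normalizes_line_mult:
  assumes "normalizes_line u x" "normalizes_line v x"
  shows "normalizes_line (u * v) x"
proof -
  obtain a b where a: "a \<in> center" "u * x = a * x * u" and b: "b \<in> center" "v * x = b * x * v"
    using assms unfolding normalizes_line_def by blast
  have "u * v * x = (u * b) * x * v"
    using b(2) by (simp add: mult.assoc)
  also have "\<dots> = (b * u) * x * v"
    by (simp only: center_commute[OF b(1), of u])
  also have "\<dots> = b * (u * x) * v"
    by (simp only: mult.assoc)
  also have "\<dots> = (b * a) * x * (u * v)"
    using a(2) by (simp add: mult.assoc)
  finally show ?thesis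
    unfolding normalizes_line_def using center_mult_closed[OF b(1) a(1)] by blast
qed

lemma normalizes_line_inverse:
  assumes "normalizes_line u x" "u \<noteq> 0" "x \<noteq> 0"
  shows "normalizes_line (inverse u) x"
proof -
  obtain a where a: "a \<in> center" "u * x = a * x * u"
    using assms(1) unfolding normalizes_line_def by blast
  have "a \<noteq> 0"
    using a(2) assms(2,3) by auto
  have "x * inverse u = inverse u * (u * x) * inverse u"
    using assms(2) by (simp add: mult.assoc[symmetric])
  also have "\<dots> = inverse u * (a * x * u) * inverse u"
    using a(2) by simp
  also have "\<dots> = inverse u * (a * x)"
    using assms(2) by (simp add: mult.assoc)
  also have "\<dots> = a * (inverse u * x)"
    using center_commute[OF a(1), of "inverse u"] by (simp add: mult.assoc[symmetric])
  finally have "inverse a * (x * inverse u) = inverse u * x"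
    using \<open>a \<noteq> 0\<close> by (simp add: mult.assoc[symmetric])
  then show ?thesis
    unfolding normalizes_line_def using center_inverse_closed[OF a(1)]
    by (metis mult.assoc)
qed

lemma subgroup_line_normalizer:
  assumes "x \<noteq> 0"
  shows "subgroup (line_normalizer x) mult_grp"
proof
  show "line_normalizer x \<subseteq> carrier mult_grp"
    unfolding line_normalizer_def by auto
  show "\<one>\<^bsub>mult_grp\<^esub> \<in> line_normalizer x"
    unfolding line_normalizer_def normalizes_line_def using one_in_center by force
  show "u \<otimes>\<^bsub>mult_grp\<^esub> v \<in> line_normalizer x"
    if "u \<in> line_normalizer x" "v \<in> line_normalizer x" for u v
    using that normalizes_line_mult unfolding line_normalizer_def by auto
  show "inv\<^bsub>mult_grp\<^esub> u \<in> line_normalizer x" if "u \<in> line_normalizer x" for u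
    using that normalizes_line_inverse assms unfolding line_normalizer_def by auto
qed

lemma line_normalizer_neq_carrier:
  assumes "x \<notin> center"
  shows "line_normalizer x \<noteq> carrier mult_grp"
proof
  assume full: "line_normalizer x = carrier mult_grp"
  obtain w where w: "x * w \<noteq> w * x"
    using assms unfolding center_def by auto
  then have "w \<noteq> 0" "w + 1 \<noteq> 0"
    by (auto simp: eq_neg_iff_add_eq_0[symmetric])
  then have "normalizes_line w x" "normalizes_line (w + 1) x"
    using full unfolding line_normalizer_def by auto
  moreover have "x \<noteq> 0"
    using assms zero_in_center by auto
  ultimately show False
    using commute_if_plus_one_normalizes_line w by metis
qed

lemma normalizes_line_if_derived_subset_center:
  assumes "subgroup M mult_grp" "derived mult_grp M \<subseteq> center" "y \<in> M" "z \<in> M"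
  shows "normalizes_line y z"
proof -
  have "y \<noteq> 0" "z \<noteq> 0"
    using subgroup.subset[OF assms(1)] assms(3,4) by auto
  have "y \<otimes>\<^bsub>mult_grp\<^esub> z \<otimes>\<^bsub>mult_grp\<^esub> inv\<^bsub>mult_grp\<^esub> y \<otimes>\<^bsub>mult_grp\<^esub> inv\<^bsub>mult_grp\<^esub> z
      \<in> derived mult_grp M"
    unfolding derived_def using assms(3,4) by (intro generate.incl) blast
  then have "y * z * inverse y * inverse z \<in> center"
    using assms(2) \<open>y \<noteq> 0\<close> \<open>z \<noteq> 0\<close> by auto
  moreover have "y * z = (y * z * inverse y * inverse z) * z * y"
    using \<open>y \<noteq> 0\<close> \<open>z \<noteq> 0\<close> by (simp add: mult.assoc)
  ultimately show ?thesis
    unfolding normalizes_line_def by blast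
qed

lemma irreducible_subgroup_centralizer:
  assumes "irreducible_subgroup M" "\<And>y. y \<in> M \<Longrightarrow> y * x = x * y"
  shows "x \<in> center"
proof -
  have "center \<union> M \<subseteq> {z. z * x = x * z}"
    using assms(2) center_commute by auto
  then have "div_subring_gen (center \<union> M) \<subseteq> {z. z * x = x * z}"
    by (rule div_subring_gen_least[OF div_subring_centralizer])
  then have "z * x = x * z" for z
    using assms(1) unfolding irreducible_subgroup_def by auto
  then show ?thesis
    by (simp add: center_def)
qed

lemma irreducible_subgroup_not_subset_center:
  fixes M :: "'a::division_ring set"
  assumes "irreducible_subgroup M" "\<exists>x y :: 'a. x * y \<noteq> y * x"
  shows "\<not> M \<subseteq> center"
proof
  assume "M \<subseteq> center"
  then have "x \<in> center" for x :: 'a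
    by (intro irreducible_subgroup_centralizer[OF assms(1)]) (use center_commute in blast)
  then show False
    using assms(2) by (auto simp: center_def)
qed

lemma one_plus_in_maximal_subgroup:
  assumes "maximal_subgroup M" "derived mult_grp M \<subseteq> center" "x \<in> M" "x \<notin> center"
  shows "1 + x \<in> M"
proof -
  have M: "subgroup M mult_grp"
    and maximal: "\<And>H. subgroup H mult_grp \<Longrightarrow> M \<subseteq> H \<Longrightarrow> H = M \<or> H = carrier mult_grp"
    using assms(1) unfolding maximal_subgroup_def by auto
  have "x \<noteq> 0"
    using assms(4) zero_in_center by auto
  have "1 + x \<noteq> 0"
  proof
    assume "1 + x = 0"
    then have "x = - 1"
      by (simp add: eq_neg_iff_add_eq_0 add.commute)
    then show False
      using assms(4) by (simp add: center_def)
  qed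
  have "M \<subseteq> line_normalizer x"
    using normalizes_line_if_derived_subset_center[OF M assms(2) _ assms(3)] subgroup.subset[OF M]
    unfolding line_normalizer_def by auto
  then have "line_normalizer x = M"
    using maximal[OF subgroup_line_normalizer[OF \<open>x \<noteq> 0\<close>]] line_normalizer_neq_carrier[OF assms(4)]
    by blast
  moreover have "normalizes_line (1 + x) x"
    unfolding normalizes_line_def using one_in_center by (force simp: algebra_simps)
  ultimately show ?thesis
    using \<open>1 + x \<noteq> 0\<close> unfolding line_normalizer_def by auto
qed

theorem lemma2p6:
  fixes M :: "('a::division_ring) set"
  assumes "\<exists>x y :: 'a. x * y \<noteq> y * x"
    and "maximal_subgroup M"
    and "irreducible_subgroup M"
    and "locally_solvable M"
  shows "\<not> derived mult_grp M \<subseteq> center"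
proof
  assume derived: "derived mult_grp M \<subseteq> center"
  have M: "subgroup M mult_grp"
    using assms(2) unfolding maximal_subgroup_def by auto
  obtain x where x: "x \<in> M" "x \<notin> center"
    using irreducible_subgroup_not_subset_center assms(1,3) by blast
  have "1 + x \<in> M"
    using one_plus_in_maximal_subgroup assms(2) derived x by blast
  have "y * x = x * y" if "y \<in> M" for y
  proof (rule commute_if_normalizes_line_and_one_plus)
    show "normalizes_line y x" "normalizes_line y (1 + x)"
      using normalizes_line_if_derived_subset_center[OF M derived] that x(1) \<open>1 + x \<in> M\<close>
      by auto
    show "y \<noteq> 0"
      using subgroup.subset[OF M] that by auto
  qed (rule x(2))
  then show False
    using irreducible_subgroup_centralizer[OF assms(3)] x(2) by blast
qed

end
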